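(* Let $\varphi$ be a computable forecasting system, $\mathcal D$ a countable set whose elements are encoded by natural numbers, and $C\subseteq\mathcal D\times\mathbb N_0\times\mathbb S$ a recursive set such that $|s|\le p$ for all $(d,p,s)\in C$. For $d\in\mathcal D$ and $p\in\mathbb N_0$ let $C_{d,p}=\{s\in\mathbb S:(d,p,s)\in C\}$. Then $(d,p,s)\mapsto\overline P_\varphi([C_{d,p}]\mid s)$ is a computable real map on $\mathcal D\times\mathbb N_0\times\mathbb S$.
   Context: $\mathbb N_0=\{0,1,\dots\}$; $\Omega=\{0,1\}^{\mathbb N}$; $\mathbb S$ finite binary strings, $|s|$ length, $\omega^n$ the first $n$ entries of $\omega$; $[s]=\{\omega:\omega^{|s|}=s\}$, $[A]=\bigcup_{s\in A}[s]$. $\mathcal I$: nonempty closed subintervals of $[0,1]$; $\overline E_I(f)=\max_{p\in I}[pf(1)+(1-p)f(0)]$. Forecasting system $\varphi:\mathbb S\to\mathcal I$, $\underline\varphi=\min\varphi$, $\overline\varphi=\max\varphi$. Supermartingale for $\varphi$: $M:\mathbb S\to\mathbb R$ with $\overline E_{\varphi(s)}(M(s\,\cdot))\le M(s)$ for all $s$. Conditional global upper probability: for $G\subseteq\Omega$ and $s\in\mathbb S$, $\overline P_\varphi(G\mid s)=\inf\{M(s):M\text{ supermartingale for }\varphi,\ \liminf_{n}M(\omega^n)\ge\mathbb 1_G(\omega)\text{ for all }\omega\in[s]\}$. Computability: standard notions of recursive maps/sets on encoded countable sets; a real map $r:\mathcal E\to\mathbb R$ is computable if there is a recursive $q:\mathcal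 E\times\mathbb N_0\to\mathbb Q$ with $|r(e)-q(e,N)|\le2^{-N}$ for all $e,N$; $\varphi$ is computable if $\underline\varphi,\overline\varphi$ are computable. *)

theory Defs
  imports Complex_Main "HOL-Library.Extended_Real" "HOL-Library.Liminf_Limsup" "HOL-Library.Nat_Bijection" "HOL-Library.Indicator_Function"
begin

text \<open>grec n f: f is a general recursive function of arity n (arguments given as a list
  of length n; values on lists of other lengths are irrelevant).  Minimisation is only
  allowed when it is total, so this is the class of total recursive functions.\<close>

inductive grec :: "nat \<Rightarrow> (nat list \<Rightarrow> nat) \<Rightarrow> bool" where
  g_zero: "grec n (\<lambda>_. 0)"
| g_succ: "grec 1 (\<lambda>xs. Suc (hd xs))"
| g_proj: "i < n \<Longrightarrow> grec n (\<lambda>xs. xs ! i)"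
| g_comp: "grec m f \<Longrightarrow> length gs = m \<Longrightarrow> (\<forall>g\<in>set gs. grec n g)
          \<Longrightarrow> grec n (\<lambda>xs. f (map (\<lambda>g. g xs) gs))"
| g_primrec: "grec n f \<Longrightarrow> grec (n + 2) g
          \<Longrightarrow> grec (Suc n) (\<lambda>xs. rec_nat (f (tl xs)) (\<lambda>k r. g (k # r # tl xs)) (hd xs))"
| g_mu: "grec (Suc n) f \<Longrightarrow> (\<forall>xs. length xs = n \<longrightarrow> (\<exists>y. f (y # xs) = 0))
          \<Longrightarrow> grec n (\<lambda>xs. LEAST y. f (y # xs) = 0)"

definition recursive_fun :: "(nat \<Rightarrow> nat) \<Rightarrow> bool" where
  "recursive_fun h \<longleftrightarrow> (\<exists>f. grec 1 f \<and> (\<forall>x. h x = f [x]))"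

definition enc_str :: "bool list \<Rightarrow> nat" where
  "enc_str s = list_encode (map of_bool s)"

definition rat_of_code :: "nat \<Rightarrow> rat" where
  "rat_of_code n = of_int (int_decode (fst (prod_decode n))) / of_nat (Suc (snd (prod_decode n)))"

definition enc_DNS :: "('d \<Rightarrow> nat) \<Rightarrow> ('d \<times> nat \<times> bool list) \<Rightarrow> nat" where
  "enc_DNS encD = (\<lambda>(d, p, s). prod_encode (encD d, prod_encode (p, enc_str s)))"

definition recursive_set :: "('e \<Rightarrow> nat) \<Rightarrow> 'e set \<Rightarrow> bool" where
  "recursive_set enc A \<longleftrightarrow> (\<exists>g. recursive_fun g \<and> (\<forall>e. e \<in> A \<longleftrightarrow> g (enc e) = 0))"

definition computable_real :: "('e \<Rightarrow> nat) \<Rightarrow> ('e \<Rightarrow> real) \<Rightarrow> bool" where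
  "computable_real enc r \<longleftrightarrow> (\<exists>q. recursive_fun q \<and>
     (\<forall>e N. \<bar>r e - real_of_rat (rat_of_code (q (prod_encode (enc e, N))))\<bar> \<le> (1/2) ^ N))"

definition prefix :: "nat \<Rightarrow> (nat \<Rightarrow> bool) \<Rightarrow> bool list" where
  "prefix n \<omega> = map \<omega> [0..<n]"

definition cyl :: "bool list \<Rightarrow> (nat \<Rightarrow> bool) set" where
  "cyl s = {\<omega>. prefix (length s) \<omega> = s}"

definition cyl_set :: "bool list set \<Rightarrow> (nat \<Rightarrow> bool) set" where
  "cyl_set A = (\<Union>s\<in>A. cyl s)"

definition forecasting_system :: "(bool list \<Rightarrow> real set) \<Rightarrow> bool" where
  "forecasting_system \<phi> \<longleftrightarrow> (\<forall>s. \<exists>a b. 0 \<le> a \<and> a \<le> b \<and> b \<le> 1 \<and> \<phi> s = {a..b})"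

definition computable_forecast :: "(bool list \<Rightarrow> real set) \<Rightarrow> bool" where
  "computable_forecast \<phi> \<longleftrightarrow> computable_real enc_str (\<lambda>s. Inf (\<phi> s))
                              \<and> computable_real enc_str (\<lambda>s. Sup (\<phi> s))"

definition upper_exp :: "real set \<Rightarrow> (bool \<Rightarrow> real) \<Rightarrow> real" where
  "upper_exp I f = (SUP p\<in>I. p * f True + (1 - p) * f False)"

definition supermartingale :: "(bool list \<Rightarrow> real set) \<Rightarrow> (bool list \<Rightarrow> real) \<Rightarrow> bool" where
  "supermartingale \<phi> M \<longleftrightarrow> (\<forall>s. upper_exp (\<phi> s) (\<lambda>x. M (s @ [x])) \<le> M s)"

definition upper_prob :: "(bool list \<Rightarrow> real set) \<Rightarrow> (nat \<Rightarrow> bool) set \<Rightarrow> bool list \<Rightarrow> ereal" where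
  "upper_prob \<phi> G s = Inf {ereal (M s) | M. supermartingale \<phi> M \<and>
      (\<forall>\<omega>\<in>cyl s. liminf (\<lambda>n. ereal (M (prefix n \<omega>))) \<ge> ereal (indicator G \<omega>))}"

end

theory Submission
  imports Defs
begin

text \<open>
  Write \<open>A = C\<^sub>d\<^sub>,\<^sub>p\<close>. Since all strings in \<open>A\<close> have length at most \<open>p\<close>, membership of a path in
  \<open>[A]\<close> is decided at time \<open>p\<close>, and the upper probability of \<open>[A]\<close> given \<open>s\<close> is the value of a
  finite backward induction: \<open>V t\<close> is the indicator that some prefix of \<open>t\<close> lies in \<open>A\<close> when
  \<open>|t| \<ge> p\<close>, and the upper expectation under \<open>\<phi> t\<close> of \<open>V (t b)\<close> otherwise. Indeed \<open>V\<close> is a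
  supermartingale with the right limits, while a supermartingale \<open>M\<close> dominating the indicator
  in the limit dominates \<open>V\<close>: otherwise, following children on which \<open>M\<close> does not increase
  would produce a path violating the limit condition.

  The induction has depth \<open>K = p - |s|\<close>. Run in dyadic arithmetic with denominator \<open>2\<^sup>P\<close>,
  using rational approximations of the endpoints of \<open>\<phi> t\<close>, each level costs an error of at most
  \<open>3/2\<^sup>P\<close>, so \<open>P = N + K + 2\<close> gives accuracy \<open>2\<^sup>-\<^sup>N\<close>. Packing the values of one level
  into the digits of a single number turns the computation into a primitive recursion relative
  to the decision procedure for \<open>C\<close> and the approximations of \<open>\<phi>\<close>.
\<close>

section \<open>Recursive functions of several arguments\<close>

definition computable :: "nat \<Rightarrow> (nat list \<Rightarrow> nat) \<Rightarrow> bool" where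
  "computable n F \<longleftrightarrow> (\<exists>f. grec n f \<and> (\<forall>xs. length xs = n \<longrightarrow> f xs = F xs))"

named_theorems computable_intros

lemma computable_cong:
  "computable n F \<Longrightarrow> (\<And>xs. length xs = n \<Longrightarrow> F xs = G xs) \<Longrightarrow> computable n G"
  unfolding computable_def by metis

lemma computable_nth [computable_intros]: "i < n \<Longrightarrow> computable n (\<lambda>xs. xs ! i)"
  unfolding computable_def using g_proj by blast

lemma computable_comp:
  assumes F: "computable m F" and len: "length gs = m" and gs: "\<forall>g\<in>set gs. computable n g"
  shows "computable n (\<lambda>xs. F (map (\<lambda>g. g xs) gs))"
proof -
  obtain f where f: "grec m f" "\<forall>xs. length xs = m \<longrightarrow> f xs = F xs"
    using F computable_def by blast
  define hs where "hs = map (\<lambda>g. SOME h. grec n h \<and> (\<forall>xs. length xs = n \<longrightarrow> h xs = g xs)) gs"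
  have hs: "grec n (hs ! i) \<and> (\<forall>xs. length xs = n \<longrightarrow> (hs ! i) xs = (gs ! i) xs)"
    if "i < length gs" for i
  proof -
    have "\<exists>h. grec n h \<and> (\<forall>xs. length xs = n \<longrightarrow> h xs = (gs ! i) xs)"
      using gs that nth_mem unfolding computable_def by blast
    from someI_ex[OF this] show ?thesis unfolding hs_def using that by simp
  qed
  have "grec n (\<lambda>xs. f (map (\<lambda>h. h xs) hs))"
    by (rule g_comp[OF f(1)]) (use len hs in \<open>auto simp: hs_def in_set_conv_nth\<close>)
  moreover have "map (\<lambda>h. h xs) hs = map (\<lambda>g. g xs) gs" if "length xs = n" for xs
    using hs that by (simp add: hs_def list_eq_iff_nth_eq)
  ultimately show ?thesis
    unfolding computable_def using f(2) len by (intro exI[of _ "\<lambda>xs. f (map (\<lambda>h. h xs) hs)"]) auto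
qed

lemma computable_comp1:
  "computable 1 (\<lambda>ys. F (ys!0)) \<Longrightarrow> computable n a \<Longrightarrow> computable n (\<lambda>xs. F (a xs))"
  using computable_comp[of 1 "\<lambda>ys. F (ys!0)" "[a]" n] by simp

lemma computable_comp2:
  "computable 2 (\<lambda>ys. F (ys!0) (ys!1)) \<Longrightarrow> computable n a \<Longrightarrow> computable n b
   \<Longrightarrow> computable n (\<lambda>xs. F (a xs) (b xs))"
  using computable_comp[of 2 "\<lambda>ys. F (ys!0) (ys!1)" "[a, b]" n] by simp

lemma computable_comp5:
  "computable 5 (\<lambda>ys. F (ys!0) (ys!1) (ys!2) (ys!3) (ys!4)) \<Longrightarrow> computable n a \<Longrightarrow> computable n b
   \<Longrightarrow> computable n c \<Longrightarrow> computable n d \<Longrightarrow> computable n e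
   \<Longrightarrow> computable n (\<lambda>xs. F (a xs) (b xs) (c xs) (d xs) (e xs))"
  using computable_comp[of 5 "\<lambda>ys. F (ys!0) (ys!1) (ys!2) (ys!3) (ys!4)" "[a, b, c, d, e]" n]
  by (simp add: numeral_eq_Suc)

lemma computable_Suc [computable_intros]:
  assumes "computable n a"
  shows "computable n (\<lambda>xs. Suc (a xs))"
proof (rule computable_comp1[OF _ assms])
  have "\<forall>xs. length xs = 1 \<longrightarrow> Suc (hd xs) = Suc (xs ! 0)"
    by (auto simp: length_Suc_conv)
  with g_succ show "computable 1 (\<lambda>ys. Suc (ys ! 0))"
    unfolding computable_def by blast
qed

lemma computable_const [computable_intros]: "computable n (\<lambda>xs. c)"
proof (induction c)
  case 0
  show ?case unfolding computable_def by (rule exI[of _ "\<lambda>_. 0"]) (simp add: g_zero)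
next
  case (Suc c)
  then show ?case by (rule computable_Suc)
qed

(* Not a computable_intros rule: its conclusion matches every function application. *)
lemma computable_recursive_fun:
  assumes "recursive_fun h" "computable n a"
  shows "computable n (\<lambda>xs. h (a xs))"
proof (rule computable_comp1[OF _ assms(2)])
  obtain f where "grec 1 f" "\<forall>x. h x = f [x]"
    using assms(1) unfolding recursive_fun_def by blast
  then show "computable 1 (\<lambda>ys. h (ys!0))"
    unfolding computable_def by (intro exI[of _ f]) (auto simp: length_Suc_conv)
qed

lemma recursive_fun_computable:
  assumes "computable 1 (\<lambda>ys. h (ys!0))"
  shows "recursive_fun h"
proof -
  obtain f where f: "grec 1 f" "\<And>xs. length xs = 1 \<Longrightarrow> f xs = h (xs!0)"
    using assms unfolding computable_def by blast
  have "h x = f [x]" for x using f(2)[of "[x]"] by simp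
  with f(1) show ?thesis unfolding recursive_fun_def by blast
qed

lemma map_nth_upt: "length L = n \<Longrightarrow> map ((!) L) [0..<n] = L"
  using map_nth[of L] by simp

lemma computable_rec_nat [computable_intros]:
  assumes K: "computable n K" and I: "computable n I"
    and S: "computable (Suc (Suc n)) (\<lambda>ys. S (ys!0) (ys!1) (map (\<lambda>j. ys ! Suc (Suc j)) [0..<n]))"
  shows "computable n (\<lambda>xs. rec_nat (I xs) (\<lambda>k r. S k r xs) (K xs))"
proof -
  let ?S = "\<lambda>ys. S (ys!0) (ys!1) (map (\<lambda>j. ys ! Suc (Suc j)) [0..<n])"
  let ?R = "\<lambda>ys. rec_nat (I (tl ys)) (\<lambda>k r. ?S (k # r # tl ys)) (hd ys)"
  obtain f where f: "grec n f" "\<forall>xs. length xs = n \<longrightarrow> f xs = I xs"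
    using I computable_def by blast
  obtain g where g: "grec (n + 2) g" "\<forall>xs. length xs = Suc (Suc n) \<longrightarrow> g xs = ?S xs"
    using S unfolding computable_def by (metis add_2_eq_Suc')
  have "\<forall>ys. length ys = Suc n \<longrightarrow>
      rec_nat (f (tl ys)) (\<lambda>k r. g (k # r # tl ys)) (hd ys) = ?R ys"
    using f(2) g(2) by simp
  then have R: "computable (Suc n) ?R"
    unfolding computable_def using g_primrec[OF f(1) g(1)] by blast
  have "computable n (\<lambda>xs. ?R (map (\<lambda>g. g xs) (K # map (\<lambda>j xs. xs ! j) [0..<n])))"
    by (rule computable_comp[OF R]) (auto simp: K computable_nth)
  then show ?thesis
  proof (rule computable_cong)
    fix xs :: "nat list" assume "length xs = n"
    then have "map (\<lambda>j. xs ! j) [0..<n] = xs"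
      by (simp add: map_nth_upt)
    then show "?R (map (\<lambda>g. g xs) (K # map (\<lambda>j xs. xs ! j) [0..<n]))
        = rec_nat (I xs) (\<lambda>k r. S k r xs) (K xs)"
      by (simp add: comp_def)
  qed
qed

lemma sum_lessThan_rec_nat: "(\<Sum>i<k. f i) = rec_nat 0 (\<lambda>i r. r + f i) k"
  by (induction k) simp_all

lemma computable_add [computable_intros]:
  assumes "computable n a" "computable n b"
  shows "computable n (\<lambda>xs. a xs + b xs)"
proof (rule computable_comp2[OF _ assms])
  have "computable 2 (\<lambda>ys. rec_nat (ys!0) (\<lambda>k r. Suc r) (ys!1))"
    by (rule computable_intros | simp)+
  moreover have "rec_nat a (\<lambda>k r. Suc r) b = a + b" for a b :: nat by (induction b) simp_all
  ultimately show "computable 2 (\<lambda>ys. ys!0 + ys!1)" by simp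
qed

lemma computable_mult [computable_intros]:
  assumes "computable n a" "computable n b"
  shows "computable n (\<lambda>xs. a xs * b xs)"
proof (rule computable_comp2[OF _ assms])
  have "computable 2 (\<lambda>ys. rec_nat 0 (\<lambda>k r. r + ys!0) (ys!1))"
    by (rule computable_intros | simp)+
  moreover have "rec_nat 0 (\<lambda>k r. r + a) b = a * b" for a b :: nat by (induction b) simp_all
  ultimately show "computable 2 (\<lambda>ys. ys!0 * ys!1)" by simp
qed

lemma computable_diff [computable_intros]:
  assumes "computable n a" "computable n b"
  shows "computable n (\<lambda>xs. a xs - b xs)"
proof (rule computable_comp2[OF _ assms])
  have "computable 1 (\<lambda>ys. rec_nat 0 (\<lambda>k r. k) (ys!0))"
    by (rule computable_intros | simp)+
  moreover have "rec_nat 0 (\<lambda>k r. k) b = b - 1" for b :: nat by (cases b) simp_all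
  ultimately have pred: "computable 1 (\<lambda>ys. ys!0 - 1)" by simp
  have "computable 2 (\<lambda>ys. rec_nat (ys!0) (\<lambda>k r. r - 1) (ys!1))"
    by (rule computable_intros computable_comp1[OF pred] | simp)+
  moreover have "rec_nat a (\<lambda>k r. r - 1) b = a - b" for a b :: nat by (induction b) simp_all
  ultimately show "computable 2 (\<lambda>ys. ys!0 - ys!1)" by simp
qed

lemma computable_if_le [computable_intros]:
  assumes "computable n a" "computable n b" "computable n c" "computable n d"
  shows "computable n (\<lambda>xs. if a xs \<le> b xs then c xs else d xs)"
proof -
  have "computable n (\<lambda>xs. c xs * (1 - (a xs - b xs)) + d xs * (1 - (1 - (a xs - b xs))))"
    using assms by (intro computable_intros)
  then show ?thesis by (rule computable_cong) auto
qed

lemma computable_if_eq [computable_intros]: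
  assumes "computable n a" "computable n b" "computable n c" "computable n d"
  shows "computable n (\<lambda>xs. if a xs = b xs then c xs else d xs)"
proof -
  have "computable n (\<lambda>xs. if (a xs - b xs) + (b xs - a xs) \<le> 0 then c xs else d xs)"
    using assms by (intro computable_intros)
  then show ?thesis by (rule computable_cong) auto
qed

lemma computable_reindex:
  assumes "computable m F" "length js = m" "\<forall>j\<in>set js. j < n"
  shows "computable n (\<lambda>xs. F (map (\<lambda>j. xs ! j) js))"
  using computable_comp[OF assms(1), of "map (\<lambda>j xs. xs ! j) js" n] assms(2,3)
  by (auto simp: comp_def intro: computable_nth)

lemma computable_sum [computable_intros]:
  assumes K: "computable n K" and B: "computable (Suc n) (\<lambda>ys. B (ys!0) (map (\<lambda>j. ys ! Suc j) [0..<n]))"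
  shows "computable n (\<lambda>xs. \<Sum>i<K xs. B i xs)"
proof -
  have "computable (Suc (Suc n)) (\<lambda>ys. (\<lambda>ys. B (ys!0) (map (\<lambda>j. ys ! Suc j) [0..<n]))
      (map (\<lambda>j. ys ! j) (0 # map (\<lambda>j. Suc (Suc j)) [0..<n])))"
    by (rule computable_reindex[OF B]) auto
  then have B': "computable (Suc (Suc n)) (\<lambda>ys. B (ys!0) (map (\<lambda>j. ys ! Suc (Suc j)) [0..<n]))"
    by (rule computable_cong) (simp add: comp_def map_nth_upt)
  have "computable (Suc (Suc n)) (\<lambda>ys. ys!1 + B (ys!0) (map (\<lambda>j. ys ! Suc (Suc j)) [0..<n]))"
    by (rule computable_add[OF computable_nth B']) simp
  then have "computable n (\<lambda>xs. rec_nat 0 (\<lambda>k r. r + B k xs) (K xs))"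
    by (rule computable_rec_nat[OF K computable_const])
  then show ?thesis by (simp add: sum_lessThan_rec_nat)
qed

lemma computable_power [computable_intros]:
  assumes "computable n a" "computable n b"
  shows "computable n (\<lambda>xs. a xs ^ b xs)"
proof -
  have "computable (Suc (Suc n)) (\<lambda>ys. a (map (\<lambda>j. ys ! j) (map (\<lambda>j. Suc (Suc j)) [0..<n])))"
    by (rule computable_reindex[OF assms(1)]) auto
  then have a': "computable (Suc (Suc n)) (\<lambda>ys. a (map (\<lambda>j. ys ! Suc (Suc j)) [0..<n]))"
    by (simp add: comp_def)
  have "computable (Suc (Suc n)) (\<lambda>ys. ys!1 * a (map (\<lambda>j. ys ! Suc (Suc j)) [0..<n]))"
    by (rule computable_mult[OF computable_nth a']) simp
  then have "computable n (\<lambda>xs. rec_nat 1 (\<lambda>k r. r * a xs) (b xs))"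
    by (rule computable_rec_nat[OF assms(2) computable_const])
  moreover have "rec_nat 1 (\<lambda>k r. r * a) b = a ^ b" for a b :: nat by (induction b) simp_all
  ultimately show ?thesis by simp
qed

lemma div_eq_card_multiples: "x div y = (if y = 0 then 0 else \<Sum>k<x. if Suc k * y \<le> x then 1 else 0)"
proof (cases "y = 0")
  case False
  have key: "Suc k * y \<le> x \<longleftrightarrow> k < x div y" for k
    using False less_eq_div_iff_mult_less_eq[of y "Suc k" x] by (simp del: mult_Suc add: Suc_le_eq)
  have "{k\<in>{..<x}. Suc k * y \<le> x} = {..<x div y}"
  proof (intro set_eqI iffI)
    fix k assume "k \<in> {..<x div y}"
    then have "k < x div y" "k < x"
      by (simp, meson lessThan_iff div_le_dividend less_le_trans)
    then show "k \<in> {k\<in>{..<x}. Suc k * y \<le> x}" unfolding key by simp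
  qed (simp add: key del: mult_Suc)
  then show ?thesis using False by (simp add: sum.If_cases Int_def)
qed simp

lemma computable_div [computable_intros]:
  assumes "computable n a" "computable n b"
  shows "computable n (\<lambda>xs. a xs div b xs)"
proof (rule computable_comp2[OF _ assms])
  have "computable 2 (\<lambda>ys. if ys!1 = 0 then 0 else \<Sum>k<ys!0. if Suc k * ys!1 \<le> ys!0 then 1 else 0)"
    by (rule computable_intros | simp)+
  then show "computable 2 (\<lambda>ys. ys!0 div ys!1)"
    by (rule computable_cong) (simp only: div_eq_card_multiples[symmetric])
qed

lemma computable_mod [computable_intros]:
  assumes "computable n a" "computable n b"
  shows "computable n (\<lambda>xs. a xs mod b xs)"
  unfolding minus_div_mult_eq_mod[symmetric] using assms by (intro computable_intros)

lemma computable_min [computable_intros]: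
  assumes "computable n a" "computable n b"
  shows "computable n (\<lambda>xs. min (a xs) (b xs))"
  unfolding min_def using assms by (intro computable_intros)

lemma computable_of_bool_ex_less [computable_intros]:
  assumes "computable n K" "computable (Suc n) (\<lambda>ys. B (ys!0) (map (\<lambda>j. ys ! Suc j) [0..<n]))"
  shows "computable n (\<lambda>xs. of_bool (\<exists>i<K xs. B i xs = 0))"
proof -
  have "computable n (\<lambda>xs. if (\<Sum>i<K xs. if B i xs = 0 then 1 else 0 :: nat) = 0 then 0 else 1)"
    by (intro computable_if_eq computable_sum assms computable_const)
  then show ?thesis by (rule computable_cong) auto
qed

section \<open>Pairs, lists and binary strings\<close>

lemma computable_prod_encode [computable_intros]:
  assumes "computable n a" "computable n b"
  shows "computable n (\<lambda>xs. prod_encode (a xs, b xs))"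
proof -
  have "computable n (\<lambda>xs. (a xs + b xs) * Suc (a xs + b xs) div 2 + a xs)"
    using assms by (intro computable_intros)
  then show ?thesis by (rule computable_cong) (simp add: prod_encode_def triangle_def)
qed

lemma prod_decode_eq_sum:
  "fst (prod_decode x) = (\<Sum>a<Suc x. \<Sum>b<Suc x. if prod_encode (a, b) = x then a else 0)"
  "snd (prod_decode x) = (\<Sum>a<Suc x. \<Sum>b<Suc x. if prod_encode (a, b) = x then b else 0)"
proof -
  obtain a0 b0 where d: "prod_decode x = (a0, b0)" by fastforce
  then have x: "x = prod_encode (a0, b0)" by (metis prod_decode_inverse)
  then have lt: "a0 < Suc x" "b0 < Suc x"
    using le_prod_encode_1 le_prod_encode_2 by (simp_all add: le_imp_less_Suc)
  have eq: "prod_encode (a, b) = x \<longleftrightarrow> a = a0 \<and> b = b0" for a b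
    unfolding x using prod_encode_eq by blast
  have "(\<Sum>b<Suc x. if prod_encode (a, b) = x then a else 0) = (if a = a0 then a else 0)" for a
    using lt unfolding eq by (simp add: sum.delta')
  moreover have "(\<Sum>b<Suc x. if prod_encode (a, b) = x then b else 0) = (if a = a0 then b0 else 0)" for a
    using lt unfolding eq by (simp add: sum.delta' if_distrib cong: if_cong)
  ultimately show "fst (prod_decode x) = (\<Sum>a<Suc x. \<Sum>b<Suc x. if prod_encode (a, b) = x then a else 0)"
    "snd (prod_decode x) = (\<Sum>a<Suc x. \<Sum>b<Suc x. if prod_encode (a, b) = x then b else 0)"
    using lt d by (simp_all add: sum.delta')
qed

lemma computable_fst_prod_decode [computable_intros]:
  assumes "computable n a"
  shows "computable n (\<lambda>xs. fst (prod_decode (a xs)))"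
proof (rule computable_comp1[OF _ assms])
  have "computable 1 (\<lambda>ys. \<Sum>a<Suc (ys!0). \<Sum>b<Suc (ys!0). if prod_encode (a, b) = ys!0 then a else 0)"
    by (rule computable_intros | simp)+
  then show "computable 1 (\<lambda>ys. fst (prod_decode (ys!0)))"
    by (simp only: prod_decode_eq_sum)
qed

lemma computable_snd_prod_decode [computable_intros]:
  assumes "computable n a"
  shows "computable n (\<lambda>xs. snd (prod_decode (a xs)))"
proof (rule computable_comp1[OF _ assms])
  have "computable 1 (\<lambda>ys. \<Sum>a<Suc (ys!0). \<Sum>b<Suc (ys!0). if prod_encode (a, b) = ys!0 then b else 0)"
    by (rule computable_intros | simp)+
  then show "computable 1 (\<lambda>ys. snd (prod_decode (ys!0)))"
    by (simp only: prod_decode_eq_sum)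
qed

lemma computable_funpow:
  assumes f: "computable 1 (\<lambda>ys. f (ys!0))" and "computable n k" "computable n a"
  shows "computable n (\<lambda>xs. (f ^^ k xs) (a xs))"
proof -
  have "computable n (\<lambda>xs. rec_nat (a xs) (\<lambda>i r. f r) (k xs))"
    by (rule computable_rec_nat[OF assms(2,3)], rule computable_comp1[OF f computable_nth]) simp
  moreover have "rec_nat c (\<lambda>i r. f r) m = (f ^^ m) c" for c m by (induction m) simp_all
  ultimately show ?thesis by simp
qed

lemma list_encode_eq_0_iff: "list_encode ys = 0 \<longleftrightarrow> ys = []"
  by (cases ys) auto

lemma length_le_list_encode: "length ys \<le> list_encode ys"
proof (induction ys)
  case (Cons y ys)
  then show ?case using le_prod_encode_2[of "list_encode ys" y] by simp
qed simp

lemma list_encode_drop_funpow: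
  "list_encode (drop k (list_decode c)) = ((\<lambda>r. snd (prod_decode (r - 1))) ^^ k) c"
proof (induction k)
  case (Suc k)
  have "prod_decode 0 = (0, 0)"
    by (simp add: prod_decode_def prod_decode_aux.simps)
  then have "list_encode (tl ys) = snd (prod_decode (list_encode ys - 1))" for ys
    by (cases ys) simp_all
  from this[of "drop k (list_decode c)"] Suc show ?case
    by (simp add: drop_Suc tl_drop)
qed simp

lemma nth_eq_fst_prod_decode_list_encode_drop:
  "k < length ys \<Longrightarrow> ys ! k = fst (prod_decode (list_encode (drop k ys) - 1))"
  by (simp add: Cons_nth_drop_Suc[symmetric])

lemma computable_list_encode_drop:
  assumes "computable n k" "computable n a"
  shows "computable n (\<lambda>xs. list_encode (drop (k xs) (list_decode (a xs))))"
  unfolding list_encode_drop_funpow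
  by (rule computable_funpow[OF _ assms]) (rule computable_intros | simp)+

lemma computable_length_list_decode [computable_intros]:
  assumes "computable n a"
  shows "computable n (\<lambda>xs. length (list_decode (a xs)))"
proof (rule computable_comp1[OF _ assms])
  have "length (list_decode c) = (\<Sum>k<c. if list_encode (drop k (list_decode c)) = 0 then 0 else 1)" for c
  proof -
    have "length (list_decode c) \<le> c"
      using length_le_list_encode[of "list_decode c"] by simp
    then have "{k\<in>{..<c}. list_encode (drop k (list_decode c)) \<noteq> 0} = {..<length (list_decode c)}"
      by (auto simp: list_encode_eq_0_iff)
    then show ?thesis
      by (simp add: sum.If_cases Int_def Collect_neg_eq[symmetric] flip: Diff_eq)
  qed
  moreover have "computable 1 (\<lambda>ys. \<Sum>k<ys!0. if list_encode (drop k (list_decode (ys!0))) = 0 then 0 else 1)"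
    by (rule computable_intros computable_list_encode_drop | simp)+
  ultimately show "computable 1 (\<lambda>ys. length (list_decode (ys!0)))" by simp
qed

lemma computable_binary_value_list_decode [computable_intros]:
  assumes "computable n a"
  shows "computable n (\<lambda>xs. foldl (\<lambda>m d. 2 * m + d) 0 (list_decode (a xs)))"
proof (rule computable_comp1[OF _ assms])
  let ?hd = "\<lambda>k c. fst (prod_decode (list_encode (drop k (list_decode c)) - 1))"
  have "foldl (\<lambda>m d. 2 * m + d) 0 (list_decode c)
      = rec_nat 0 (\<lambda>k r. 2 * r + ?hd k c) (length (list_decode c))" for c
  proof -
    have "k \<le> length (list_decode c) \<Longrightarrow>
        rec_nat 0 (\<lambda>k r. 2 * r + ?hd k c) k = foldl (\<lambda>m d. 2 * m + d) 0 (take k (list_decode c))" for k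
      by (induction k) (simp_all add: take_Suc_conv_app_nth nth_eq_fst_prod_decode_list_encode_drop)
    then show ?thesis by simp
  qed
  moreover have "computable 1 (\<lambda>ys. rec_nat 0 (\<lambda>k r. 2 * r + ?hd k (ys!0)) (length (list_decode (ys!0))))"
    by (rule computable_intros computable_list_encode_drop | simp)+
  ultimately show "computable 1 (\<lambda>ys. foldl (\<lambda>m d. 2 * m + d) 0 (list_decode (ys!0)))" by simp
qed

(* A node t of the binary tree is addressed by bin_val t and its depth; the children of the
   node n at depth L are 2 n and 2 n + 1 at depth L + 1 (bits_snoc). *)
definition bin_val :: "bool list \<Rightarrow> nat" where
  "bin_val s = foldl (\<lambda>m b. 2 * m + of_bool b) 0 s"

definition bits :: "nat \<Rightarrow> nat \<Rightarrow> bool list" where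
  "bits n L = map (\<lambda>r. odd (n div 2 ^ (L - Suc r))) [0..<L]"

lemma length_bits [simp]: "length (bits n L) = L"
  by (simp add: bits_def)

lemma bits_Suc: "bits n (Suc L) = odd (n div 2 ^ L) # bits n L"
  unfolding bits_def by (simp add: map_upt_Suc del: upt_Suc)

lemma bits_snoc: "bits (2 * n + of_bool b) (Suc L) = bits n L @ [b]"
proof (rule nth_equalityI)
  fix r assume "r < length (bits (2 * n + of_bool b) (Suc L))"
  then consider "r < L" | "r = L" by fastforce
  then show "bits (2 * n + of_bool b) (Suc L) ! r = (bits n L @ [b]) ! r"
  proof cases
    case 1
    then have "Suc L - Suc r = Suc (L - Suc r)" by simp
    moreover have "(2 * n + of_bool b) div 2 ^ Suc j = n div 2 ^ j" for j
      by (cases b) (simp_all add: div_mult2_eq)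
    ultimately show ?thesis using 1 by (simp add: bits_def nth_append)
  qed (simp add: bits_def nth_append)
qed simp

lemma bits_bin_val: "bits (bin_val s) (length s) = s"
proof (induction s rule: rev_induct)
  case (snoc b s)
  then show ?case using bits_snoc[of "bin_val s" b "length s"] by (simp add: bin_val_def)
qed (simp add: bits_def)

lemma take_bits: "l \<le> L \<Longrightarrow> take l (bits n L) = bits (n div 2 ^ (L - l)) l"
proof (rule nth_equalityI)
  fix r assume "l \<le> L" "r < length (take l (bits n L))"
  then have "n div 2 ^ (L - l) div 2 ^ (l - Suc r) = n div 2 ^ (L - Suc r)"
    by (simp add: div_mult2_eq[symmetric] power_add[symmetric])
  then show "take l (bits n L) ! r = bits (n div 2 ^ (L - l)) l ! r"
    using \<open>r < length (take l (bits n L))\<close> unfolding bits_def by simp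
qed simp

lemma list_decode_enc_str: "list_decode (enc_str s) = map of_bool s"
  by (simp add: enc_str_def)

lemma length_list_decode_enc_str: "length (list_decode (enc_str s)) = length s"
  by (simp add: list_decode_enc_str)

lemma binary_value_list_decode_enc_str: "foldl (\<lambda>m d. 2 * m + d) 0 (list_decode (enc_str s)) = bin_val s"
  by (simp add: list_decode_enc_str bin_val_def foldl_map)

lemma computable_enc_str_bits [computable_intros]:
  assumes "computable n a" "computable n b"
  shows "computable n (\<lambda>xs. enc_str (bits (a xs) (b xs)))"
proof (rule computable_comp2[OF _ assms])
  have "enc_str (bits m L) = rec_nat 0 (\<lambda>r c. Suc (prod_encode (m div 2 ^ r mod 2, c))) L" for m L
    by (induction L) (simp_all add: enc_str_def bits_Suc bits_def[of _ 0] odd_iff_mod_2_eq_one)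
  moreover have "computable 2 (\<lambda>ys. rec_nat 0 (\<lambda>r c. Suc (prod_encode (ys!0 div 2 ^ r mod 2, c))) (ys!1))"
    by (rule computable_intros | simp)+
  ultimately show "computable 2 (\<lambda>ys. enc_str (bits (ys!0) (ys!1)))" by simp
qed

section \<open>Tree recursion\<close>

lemma sum_digits_less:
  fixes f :: "nat \<Rightarrow> nat"
  assumes "\<forall>i<n. f i < B"
  shows "(\<Sum>i<n. f i * B ^ i) < B ^ n"
  using assms
proof (induction n)
  case (Suc n)
  then have "(\<Sum>i<Suc n. f i * B ^ i) < B ^ n + f n * B ^ n" by simp
  also have "\<dots> = (f n + 1) * B ^ n" by simp
  also have "\<dots> \<le> B * B ^ n" using Suc.prems by (intro mult_right_mono) auto
  finally show ?case by simp
qed simp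

lemma sum_digits_nth:
  fixes f :: "nat \<Rightarrow> nat"
  assumes "\<forall>i<n. f i < B" "j < n"
  shows "(\<Sum>i<n. f i * B ^ i) div B ^ j mod B = f j"
  using assms
proof (induction n)
  case (Suc n)
  have B: "0 < B" using Suc.prems by (metis gr_zeroI less_nat_zero_code)
  show ?case
  proof (cases "j < n")
    case True
    have "B ^ n = B ^ (n - j) * B ^ j"
      using True by (simp add: power_add[symmetric])
    then have "(\<Sum>i<Suc n. f i * B ^ i) div B ^ j
        = ((\<Sum>i<n. f i * B ^ i) + f n * B ^ (n - j) * B ^ j) div B ^ j"
      by (simp add: mult.assoc)
    also have "\<dots> = (\<Sum>i<n. f i * B ^ i) div B ^ j + f n * B ^ (n - j)"
      using B by simp
    finally have "(\<Sum>i<Suc n. f i * B ^ i) div B ^ j = (\<Sum>i<n. f i * B ^ i) div B ^ j + f n * B ^ (n - j)" .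
    moreover have "f n * B ^ (n - j) mod B = 0" using True by (simp add: power_eq_if)
    ultimately show ?thesis using Suc True by (simp add: mod_add_eq[symmetric])
  next
    case False
    then have "j = n" using Suc.prems by simp
    moreover have "(\<Sum>i<n. f i * B ^ i) < B ^ n" by (rule sum_digits_less) (use Suc.prems in auto)
    ultimately show ?thesis using B Suc.prems by simp
  qed
qed simp

fun tree_rec :: "(nat \<Rightarrow> 'a) \<Rightarrow> (nat \<Rightarrow> nat \<Rightarrow> 'a \<Rightarrow> 'a \<Rightarrow> 'a) \<Rightarrow> nat \<Rightarrow> nat \<Rightarrow> 'a" where
  "tree_rec base step 0 j = base j"
| "tree_rec base step (Suc r) j = step r j (tree_rec base step r (2 * j)) (tree_rec base step r (2 * j + 1))"

(* The 2 ^ (K - r) values of level r are the base-B digits of a single number, so the tree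
   recursion becomes a primitive recursion on r. *)
lemma computable_tree_rec:
  assumes base: "computable 2 (\<lambda>ys. base (ys!0) (ys!1))"
    and step: "computable 5 (\<lambda>ys. step (ys!0) (ys!1) (ys!2) (ys!3) (ys!4))"
    and K: "computable 1 (\<lambda>ys. K (ys!0))" and B: "computable 1 (\<lambda>ys. B (ys!0))"
    and base_bound: "\<And>x j. base x j < B x"
    and step_bound: "\<And>x r j w0 w1. w0 < B x \<Longrightarrow> w1 < B x \<Longrightarrow> step x r j w0 w1 < B x"
  shows "computable 1 (\<lambda>ys. tree_rec (base (ys!0)) (step (ys!0)) (K (ys!0)) 0)"
proof -
  define digit where "digit x T i = T div B x ^ i mod B x" for x T i
  define table where "table x = rec_nat (\<Sum>i<2 ^ K x. base x i * B x ^ i)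
    (\<lambda>r T. \<Sum>i<2 ^ (K x - Suc r). step x r i (digit x T (2 * i)) (digit x T (2 * i + 1)) * B x ^ i)" for x
  have bound: "tree_rec (base x) (step x) r j < B x" for x r j
    by (induction r arbitrary: j) (simp_all add: base_bound step_bound)
  have table: "table x r = (\<Sum>i<2 ^ (K x - r). tree_rec (base x) (step x) r i * B x ^ i)"
    if "r \<le> K x" for x r
    using that
  proof (induction r)
    case (Suc r)
    have IH: "table x r = (\<Sum>i<2 ^ (K x - r). tree_rec (base x) (step x) r i * B x ^ i)"
      using Suc by simp
    have pow: "(2::nat) ^ (K x - r) = 2 * 2 ^ (K x - Suc r)"
      using Suc.prems by (metis Suc_diff_Suc Suc_le_lessD power_Suc)
    have dig: "digit x (table x r) i = tree_rec (base x) (step x) r i" if "i < 2 ^ (K x - r)" for i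
      unfolding digit_def IH by (rule sum_digits_nth) (simp_all add: bound that)
    have "table x (Suc r) = (\<Sum>i<2 ^ (K x - Suc r).
        step x r i (digit x (table x r) (2 * i)) (digit x (table x r) (2 * i + 1)) * B x ^ i)"
      by (simp add: table_def)
    also have "\<dots> = (\<Sum>i<2 ^ (K x - Suc r). tree_rec (base x) (step x) (Suc r) i * B x ^ i)"
      using pow by (intro sum.cong) (simp_all add: dig)
    finally show ?case .
  qed (simp add: table_def)
  have "tree_rec (base x) (step x) (K x) 0 = digit x (table x (K x)) 0" for x
    by (simp add: table digit_def sum_digits_nth bound)
  moreover have "computable 1 (\<lambda>ys. digit (ys!0) (table (ys!0) (K (ys!0))) 0)"
    unfolding digit_def table_def
    by (rule computable_intros computable_comp5[OF step] computable_comp2[OF base]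
        computable_comp1[OF K] computable_comp1[OF B] | simp)+
  ultimately show ?thesis by simp
qed

section \<open>Backward induction and upper probability\<close>

fun backward :: "(bool list \<Rightarrow> (bool \<Rightarrow> 'a) \<Rightarrow> 'a) \<Rightarrow> (bool list \<Rightarrow> 'a) \<Rightarrow> nat \<Rightarrow> bool list \<Rightarrow> 'a" where
  "backward step leaf 0 t = leaf t"
| "backward step leaf (Suc k) t = step t (\<lambda>b. backward step leaf k (t @ [b]))"

lemma tree_rec_bits:
  assumes "r \<le> K"
  shows "tree_rec (\<lambda>j. leaf (bits (m * 2 ^ K + j) (L + K)))
      (\<lambda>r j. step (bits (m * 2 ^ (K - Suc r) + j) (L + K - Suc r))) r j
    = backward (\<lambda>t w. step t (w False) (w True)) leaf r (bits (m * 2 ^ (K - r) + j) (L + K - r))"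
  using assms
proof (induction r arbitrary: j)
  case (Suc r)
  let ?t = "bits (m * 2 ^ (K - Suc r) + j) (L + K - Suc r)"
  have "(2::nat) ^ (K - r) = 2 * 2 ^ (K - Suc r)"
    using Suc.prems by (metis Suc_diff_Suc Suc_le_lessD power_Suc)
  then have idx: "m * 2 ^ (K - r) + (2 * j + of_bool b) = 2 * (m * 2 ^ (K - Suc r) + j) + of_bool b" for b
    by (simp add: algebra_simps)
  have len: "L + K - r = Suc (L + K - Suc r)" using Suc.prems by simp
  have "bits (m * 2 ^ (K - r) + (2 * j + of_bool b)) (L + K - r) = ?t @ [b]" for b
    unfolding idx len by (rule bits_snoc)
  from this[of False] this[of True] show ?case
    using Suc by simp
qed simp

lemma backward_approx:
  fixes stepA :: "bool list \<Rightarrow> nat \<Rightarrow> nat \<Rightarrow> nat" and \<delta> :: real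
  assumes leaf: "\<And>t. leafA t \<le> 2 ^ P \<and> leafA t / 2 ^ P = leaf t"
    and step: "\<And>t w0 w1 V e. w0 \<le> 2 ^ P \<Longrightarrow> w1 \<le> 2 ^ P
      \<Longrightarrow> \<bar>w0 / 2 ^ P - V False\<bar> \<le> e \<Longrightarrow> \<bar>w1 / 2 ^ P - V True\<bar> \<le> e
      \<Longrightarrow> stepA t w0 w1 \<le> 2 ^ P \<and> \<bar>stepA t w0 w1 / 2 ^ P - step t V\<bar> \<le> e + \<delta>"
  shows "backward (\<lambda>t w. stepA t (w False) (w True)) leafA k t \<le> 2 ^ P
    \<and> \<bar>backward (\<lambda>t w. stepA t (w False) (w True)) leafA k t / 2 ^ P - backward step leaf k t\<bar> \<le> k * \<delta>"
proof (induction k arbitrary: t)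
  case 0
  then show ?case using leaf by simp
next
  case (Suc k)
  let ?A = "\<lambda>b. backward (\<lambda>t w. stepA t (w False) (w True)) leafA k (t @ [b])"
  have "stepA t (?A False) (?A True) \<le> 2 ^ P \<and>
    \<bar>stepA t (?A False) (?A True) / 2 ^ P - step t (\<lambda>b. backward step leaf k (t @ [b]))\<bar> \<le> k * \<delta> + \<delta>"
    using Suc.IH by (intro step) auto
  then show ?case by (simp add: algebra_simps)
qed

lemma forecasting_system_interval:
  assumes "forecasting_system \<phi>"
  shows "\<phi> t = {Inf (\<phi> t)..Sup (\<phi> t)}" "0 \<le> Inf (\<phi> t)" "Inf (\<phi> t) \<le> Sup (\<phi> t)" "Sup (\<phi> t) \<le> 1"
proof -
  obtain a b where "0 \<le> a" "a \<le> b" "b \<le> 1" "\<phi> t = {a..b}"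
    using assms forecasting_system_def by blast
  then show "\<phi> t = {Inf (\<phi> t)..Sup (\<phi> t)}" "0 \<le> Inf (\<phi> t)" "Inf (\<phi> t) \<le> Sup (\<phi> t)" "Sup (\<phi> t) \<le> 1"
    by simp_all
qed

lemma upper_exp_interval:
  fixes a b :: real
  assumes "a \<le> b"
  shows "upper_exp {a..b} f = max (a * f True + (1 - a) * f False) (b * f True + (1 - b) * f False)"
proof -
  let ?h = "\<lambda>p. p * f True + (1 - p) * f False"
  have "?h p = f False + p * (f True - f False)" for p by (simp add: algebra_simps)
  then have "?h p \<le> max (?h a) (?h b)" if "p \<in> {a..b}" for p
    using that by (cases "f False \<le> f True") (auto simp: max_def mult_right_mono mult_right_mono_neg)
  moreover have "max (?h a) (?h b) \<in> ?h ` {a..b}" using assms by (simp add: max_def)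
  ultimately show ?thesis unfolding upper_exp_def by (intro cSup_eq_maximum) auto
qed

lemma upper_exp_forecast:
  "forecasting_system \<phi> \<Longrightarrow> upper_exp (\<phi> t) f
    = max (Inf (\<phi> t) * f True + (1 - Inf (\<phi> t)) * f False) (Sup (\<phi> t) * f True + (1 - Sup (\<phi> t)) * f False)"
  using upper_exp_interval forecasting_system_interval by metis

lemma upper_exp_const: "forecasting_system \<phi> \<Longrightarrow> upper_exp (\<phi> t) (\<lambda>_. c) = c"
  by (simp add: upper_exp_forecast algebra_simps)

lemma upper_exp_mono:
  assumes "forecasting_system \<phi>" "\<And>b. f b \<le> g b"
  shows "upper_exp (\<phi> t) f \<le> upper_exp (\<phi> t) g"
  unfolding upper_exp_forecast[OF assms(1)]
  using forecasting_system_interval[OF assms(1), of t] assms(2)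
  by (intro max.mono add_mono mult_left_mono) auto

lemma min_le_upper_exp:
  assumes "forecasting_system \<phi>"
  shows "min (f False) (f True) \<le> upper_exp (\<phi> t) f"
proof -
  let ?a = "Inf (\<phi> t)"
  have "min (f False) (f True) = ?a * min (f False) (f True) + (1 - ?a) * min (f False) (f True)"
    by (simp add: algebra_simps)
  also have "\<dots> \<le> ?a * f True + (1 - ?a) * f False"
    using forecasting_system_interval[OF assms, of t] by (intro add_mono mult_left_mono) auto
  also have "\<dots> \<le> upper_exp (\<phi> t) f"
    by (simp add: upper_exp_forecast[OF assms])
  finally show ?thesis .
qed

definition hits :: "bool list set \<Rightarrow> nat \<Rightarrow> bool list \<Rightarrow> bool" where
  "hits A p t \<longleftrightarrow> (\<exists>l\<le>p. take l t \<in> A)"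

definition horizon_value :: "(bool list \<Rightarrow> real set) \<Rightarrow> bool list set \<Rightarrow> nat \<Rightarrow> bool list \<Rightarrow> real" where
  "horizon_value \<phi> A p t =
     backward (\<lambda>t. upper_exp (\<phi> t)) (\<lambda>t. of_bool (hits A p t)) (p - length t) t"

lemma length_prefix [simp]: "length (prefix n \<omega>) = n"
  by (simp add: prefix_def)

lemma take_prefix: "l \<le> n \<Longrightarrow> take l (prefix n \<omega>) = prefix l \<omega>"
  by (simp add: prefix_def take_map)

lemma cyl_snoc_subset: "cyl (t @ [b]) \<subseteq> cyl t"
  unfolding cyl_def using take_prefix[of "length t" "Suc (length t)"] by (auto, metis append_eq_conv_conj)

lemma hits_snoc: "p \<le> length t \<Longrightarrow> hits A p (t @ [b]) = hits A p t"
  unfolding hits_def by auto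

lemma hits_prefix_iff:
  assumes "\<forall>u\<in>A. length u \<le> p" "p \<le> n"
  shows "hits A p (prefix n \<omega>) \<longleftrightarrow> \<omega> \<in> cyl_set A"
proof
  assume "hits A p (prefix n \<omega>)"
  then obtain l where "l \<le> p" "take l (prefix n \<omega>) \<in> A" unfolding hits_def by blast
  then show "\<omega> \<in> cyl_set A"
    unfolding cyl_set_def cyl_def using assms take_prefix[of l n \<omega>] by (auto intro!: bexI[of _ "prefix l \<omega>"])
next
  assume "\<omega> \<in> cyl_set A"
  then obtain u where "u \<in> A" "prefix (length u) \<omega> = u" unfolding cyl_set_def cyl_def by blast
  then show "hits A p (prefix n \<omega>)"
    unfolding hits_def using assms take_prefix[of "length u" n \<omega>] by (intro exI[of _ "length u"]) auto
qed

lemma horizon_value_Suc: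
  assumes "length t < p"
  shows "horizon_value \<phi> A p t = upper_exp (\<phi> t) (\<lambda>b. horizon_value \<phi> A p (t @ [b]))"
proof -
  have "p - length t = Suc (p - length (t @ [b]))" for b using assms by simp
  then show ?thesis unfolding horizon_value_def by simp
qed

lemma horizon_value_supermartingale:
  assumes "forecasting_system \<phi>"
  shows "supermartingale \<phi> (horizon_value \<phi> A p)"
  unfolding supermartingale_def
proof
  fix t
  show "upper_exp (\<phi> t) (\<lambda>b. horizon_value \<phi> A p (t @ [b])) \<le> horizon_value \<phi> A p t"
  proof (cases "p \<le> length t")
    case True
    then have "horizon_value \<phi> A p (t @ [b]) = horizon_value \<phi> A p t" for b
      by (simp add: horizon_value_def hits_snoc)
    then show ?thesis by (simp add: upper_exp_const[OF assms])
  qed (simp add: horizon_value_Suc)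
qed

lemma supermartingale_child_le:
  assumes "forecasting_system \<phi>" "supermartingale \<phi> M"
  shows "\<exists>b. M (t @ [b]) \<le> M t"
proof -
  have "min (M (t @ [False])) (M (t @ [True])) \<le> M t"
    using min_le_upper_exp[OF assms(1)] assms(2) unfolding supermartingale_def by (meson order_trans)
  then show ?thesis by (metis min_le_iff_disj)
qed

lemma supermartingale_nonincreasing_path:
  assumes fs: "forecasting_system \<phi>" and M: "supermartingale \<phi> M"
  shows "\<exists>\<omega>\<in>cyl t. liminf (\<lambda>n. ereal (M (prefix n \<omega>))) \<le> ereal (M t)"
proof -
  define child where "child u = u @ [SOME b. M (u @ [b]) \<le> M u]" for u
  define path where "path n = (child ^^ n) t" for n
  have M_path: "M (path n) \<le> M t" for n
  proof (induction n)
    case (Suc n)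
    have "M (child (path n)) \<le> M (path n)"
      unfolding child_def using someI_ex[OF supermartingale_child_le[OF fs M]] .
    with Suc show ?case by (simp add: path_def)
  qed (simp add: path_def)
  have path_Suc: "path (Suc n) = path n @ [SOME b. M (path n @ [b]) \<le> M (path n)]" for n
    by (simp add: path_def child_def)
  have len: "length (path n) = length t + n" for n
    by (induction n) (simp_all add: path_Suc path_def[of 0])
  have path_ext: "m \<le> n \<Longrightarrow> take (length (path m)) (path n) = path m" for m n
  proof (induction n)
    case (Suc n)
    then show ?case
      by (cases "m = Suc n") (auto simp: path_Suc le_Suc_eq len)
  qed simp
  have nth_path: "path n ! i = path m ! i" if "m \<le> n" "i < length (path m)" for m n i
    using path_ext[OF that(1)] that(2) by (metis nth_take)
  define \<omega> where "\<omega> i = path (Suc i) ! i" for i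
  have prefix_\<omega>: "prefix (length t + n) \<omega> = path n" for n
  proof (rule nth_equalityI)
    fix i assume "i < length (prefix (length t + n) \<omega>)"
    then have "i < length t + n" by simp
    then have "path (max (Suc i) n) ! i = path n ! i" "path (max (Suc i) n) ! i = \<omega> i"
      unfolding \<omega>_def by (auto intro!: nth_path simp: len)
    then show "prefix (length t + n) \<omega> ! i = path n ! i"
      using \<open>i < length (prefix (length t + n) \<omega>)\<close> by (simp add: prefix_def)
  qed (simp add: len)
  have "\<omega> \<in> cyl t" unfolding cyl_def using prefix_\<omega>[of 0] by (simp add: path_def)
  moreover have "\<forall>\<^sub>F n in sequentially. ereal (M (prefix n \<omega>)) \<le> ereal (M t)"
    unfolding eventually_sequentially
  proof (intro exI allI impI)
    fix n assume "length t \<le> n"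
    then have "prefix n \<omega> = path (n - length t)" using prefix_\<omega>[of "n - length t"] by simp
    then show "ereal (M (prefix n \<omega>)) \<le> ereal (M t)" using M_path by simp
  qed
  then have "liminf (\<lambda>n. ereal (M (prefix n \<omega>))) \<le> ereal (M t)"
    by (intro Liminf_le) simp_all
  ultimately show ?thesis by blast
qed

lemma horizon_value_le_supermartingale:
  assumes fs: "forecasting_system \<phi>" and M: "supermartingale \<phi> M"
    and G: "\<forall>\<omega>\<in>cyl s. liminf (\<lambda>n. ereal (M (prefix n \<omega>))) \<ge> ereal (indicator (cyl_set A) \<omega>)"
    and t: "cyl t \<subseteq> cyl s"
  shows "horizon_value \<phi> A p t \<le> M t"
proof -
  have "backward (\<lambda>t. upper_exp (\<phi> t)) (\<lambda>t. of_bool (hits A p t)) k t \<le> M t"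
    if "p - length t = k" "cyl t \<subseteq> cyl s" for k t
    using that
  proof (induction k arbitrary: t)
    case 0
    obtain \<omega> where \<omega>: "\<omega> \<in> cyl t" "liminf (\<lambda>n. ereal (M (prefix n \<omega>))) \<le> ereal (M t)"
      using supermartingale_nonincreasing_path[OF fs M] by blast
    then have ind: "indicator (cyl_set A) \<omega> \<le> M t"
      using G 0(2) by (meson order_trans subsetD ereal_less_eq(3))
    have "\<omega> \<in> cyl_set A" if "hits A p t"
    proof -
      obtain l where l: "l \<le> p" "take l t \<in> A" using \<open>hits A p t\<close> unfolding hits_def by blast
      have "l \<le> length t" using 0(1) l(1) by simp
      then have "prefix (length (take l t)) \<omega> = take l t"
        using \<omega>(1) take_prefix[of l "length t" \<omega>] unfolding cyl_def by simp
      with l(2) show ?thesis unfolding cyl_set_def cyl_def by blast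
    qed
    then show ?case using ind by (cases "\<omega> \<in> cyl_set A") (auto simp: indicator_def)
  next
    case (Suc k)
    have "backward (\<lambda>t. upper_exp (\<phi> t)) (\<lambda>t. of_bool (hits A p t)) k (t @ [b]) \<le> M (t @ [b])" for b
      using Suc.IH[of "t @ [b]"] Suc.prems cyl_snoc_subset[of t b] by auto
    then have "backward (\<lambda>t. upper_exp (\<phi> t)) (\<lambda>t. of_bool (hits A p t)) (Suc k) t
        \<le> upper_exp (\<phi> t) (\<lambda>b. M (t @ [b]))"
      by (simp add: upper_exp_mono[OF fs])
    also have "\<dots> \<le> M t" using M unfolding supermartingale_def by blast
    finally show ?case .
  qed
  then show ?thesis unfolding horizon_value_def using t by blast
qed

lemma upper_prob_cyl_set:
  assumes fs: "forecasting_system \<phi>" and A: "\<forall>u\<in>A. length u \<le> p"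
  shows "upper_prob \<phi> (cyl_set A) s = ereal (horizon_value \<phi> A p s)"
  unfolding upper_prob_def
proof (rule antisym)
  have "liminf (\<lambda>n. ereal (horizon_value \<phi> A p (prefix n \<omega>))) = ereal (indicator (cyl_set A) \<omega>)" for \<omega>
  proof (rule lim_imp_Liminf)
    have "\<forall>\<^sub>F n in sequentially. ereal (horizon_value \<phi> A p (prefix n \<omega>)) = ereal (indicator (cyl_set A) \<omega>)"
      unfolding eventually_sequentially horizon_value_def
      using hits_prefix_iff[OF A] by (intro exI[of _ p]) simp
    then show "((\<lambda>n. ereal (horizon_value \<phi> A p (prefix n \<omega>))) \<longlongrightarrow> ereal (indicator (cyl_set A) \<omega>)) sequentially"
      by (rule tendsto_eventually)
  qed simp
  then show "Inf {ereal (M s) |M. supermartingale \<phi> M \<and>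
      (\<forall>\<omega>\<in>cyl s. ereal (indicator (cyl_set A) \<omega>) \<le> liminf (\<lambda>n. ereal (M (prefix n \<omega>))))}
    \<le> ereal (horizon_value \<phi> A p s)"
    using horizon_value_supermartingale[OF fs] by (intro Inf_lower) auto
  show "ereal (horizon_value \<phi> A p s) \<le> Inf {ereal (M s) |M. supermartingale \<phi> M \<and>
      (\<forall>\<omega>\<in>cyl s. ereal (indicator (cyl_set A) \<omega>) \<le> liminf (\<lambda>n. ereal (M (prefix n \<omega>))))}"
    using horizon_value_le_supermartingale[OF fs] by (intro Inf_greatest) auto
qed

section \<open>Dyadic arithmetic\<close>

lemma real_div_bounds:
  fixes X Y :: nat
  assumes "0 < Y"
  shows "real (X div Y) * Y \<le> X" "X < (real (X div Y) + 1) * Y"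
proof -
  have "real X = real (X div Y) * Y + real (X mod Y)"
    by (metis div_mult_mod_eq of_nat_add of_nat_mult)
  moreover have "real (X mod Y) < Y" using assms by simp
  ultimately show "real (X div Y) * Y \<le> X" "X < (real (X div Y) + 1) * Y"
    by (simp_all add: algebra_simps)
qed

lemma div_power2_err: "\<bar>real (X div 2 ^ P) / 2 ^ P - X / 2 ^ P / 2 ^ P\<bar> \<le> 1 / 2 ^ P"
proof -
  define D :: real where "D = 2 ^ P"
  have D: "0 < D" by (simp add: D_def)
  have "real (X div 2 ^ P) * D \<le> X" "X < (real (X div 2 ^ P) + 1) * D"
    using real_div_bounds[of "2 ^ P" X] by (simp_all add: D_def)
  then have le: "real (X div 2 ^ P) \<le> X / D" and less: "X / D < real (X div 2 ^ P) + 1"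
    using D by (simp_all add: pos_le_divide_eq pos_divide_less_eq)
  have "real (X div 2 ^ P) / D \<le> X / D / D"
    by (rule divide_right_mono[OF le]) (use D in simp)
  moreover have "X / D / D < (real (X div 2 ^ P) + 1) / D"
    by (rule divide_strict_right_mono[OF less D])
  ultimately show ?thesis unfolding D_def[symmetric] by (simp add: abs_le_iff add_divide_distrib)
qed

(* 2 ^ P times the rational coded by z, rounded down and clipped to [0, 1]; an odd first
   component of z codes a negative numerator. *)
definition dyadic_approx :: "nat \<Rightarrow> nat \<Rightarrow> nat" where
  "dyadic_approx z P = min (2 ^ P)
     (if fst (prod_decode z) mod 2 = 0 then fst (prod_decode z) div 2 * 2 ^ P div Suc (snd (prod_decode z)) else 0)"

lemma dyadic_approx_le: "dyadic_approx z P \<le> 2 ^ P"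
  by (simp add: dyadic_approx_def)

lemma dyadic_approx_err:
  fixes a :: real
  assumes a: "0 \<le> a" "a \<le> 1" and z: "\<bar>a - real_of_rat (rat_of_code z)\<bar> \<le> (1/2) ^ P"
  shows "\<bar>dyadic_approx z P / 2 ^ P - a\<bar> \<le> 2 / 2 ^ P"
proof -
  obtain u v where uv: "prod_decode z = (u, v)" by fastforce
  define D :: real where "D = 2 ^ P"
  have D: "0 < D" "(1/2) ^ P = 1 / D"
    by (simp_all add: D_def power_one_over)
  let ?r = "real_of_rat (rat_of_code z)"
  have r: "\<bar>a - ?r\<bar> \<le> 1 / D" using z D by simp
  show ?thesis
  proof (cases "even u")
    case True
    then have "?r = real (u div 2) / Suc v"
      by (simp add: rat_of_code_def uv int_decode_def sum_decode_def of_rat_divide of_rat_add)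
    then have rD: "?r * D = real (u div 2 * 2 ^ P) / Suc v" by (simp add: D_def)
    define q where "q = u div 2 * 2 ^ P div Suc v"
    have "real q * Suc v \<le> real (u div 2 * 2 ^ P)" "real (u div 2 * 2 ^ P) < (real q + 1) * Suc v"
      unfolding q_def by (rule real_div_bounds; simp)+
    then have "real q \<le> ?r * D" "?r * D < real q + 1"
      unfolding rD by (simp_all add: field_simps)
    have "dyadic_approx z P = min (2 ^ P) q"
      using True by (simp add: dyadic_approx_def uv q_def even_iff_mod_2_eq_zero)
    show ?thesis
    proof (cases "q \<le> 2 ^ P")
      case True
      then have "real (dyadic_approx z P) = q" using \<open>dyadic_approx z P = _\<close> by simp
      then show ?thesis
        using \<open>real q \<le> ?r * D\<close> \<open>?r * D < real q + 1\<close> r D unfolding D_def[symmetric]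
        by (simp add: abs_le_iff field_simps)
    next
      case False
      then have "real (dyadic_approx z P) = D"
        using \<open>dyadic_approx z P = _\<close> unfolding D_def by simp
      moreover have "D \<le> real q"
        using False unfolding D_def by (metis nat_le_linear of_nat_le_iff of_nat_numeral of_nat_power)
      ultimately show ?thesis
        using \<open>real q \<le> ?r * D\<close> r a D unfolding D_def[symmetric]
        by (simp add: abs_le_iff field_simps)
    qed
  next
    case False
    then have "?r < 0"
      by (simp add: rat_of_code_def uv int_decode_def sum_decode_def of_rat_divide of_rat_add divide_neg_pos)
    then have "a \<le> 1 / D" using r unfolding abs_le_iff by linarith
    moreover have "1 / D \<le> 2 / D" using D by (simp add: divide_right_mono)
    moreover have "dyadic_approx z P = 0"
      using False by (simp add: dyadic_approx_def uv even_iff_mod_2_eq_zero)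
    ultimately show ?thesis using a unfolding D_def by simp
  qed
qed

(* Scaled by 2 ^ P, the maximum over p \<in> {\<alpha>, \<beta>} / 2 ^ P of p w1 + (1 - p) w0, rounded:
   the larger weight \<beta> wins exactly when w0 \<le> w1. *)
definition interp_max :: "nat \<Rightarrow> nat \<Rightarrow> nat \<Rightarrow> nat \<Rightarrow> nat \<Rightarrow> nat" where
  "interp_max P \<alpha> \<beta> w0 w1 =
     (if w0 \<le> w1 then w0 + \<beta> * (w1 - w0) div 2 ^ P else w0 - \<alpha> * (w0 - w1) div 2 ^ P)"

lemma interp_max_le:
  assumes "\<alpha> \<le> 2 ^ P" "\<beta> \<le> 2 ^ P" "w0 \<le> 2 ^ P" "w1 \<le> 2 ^ P"
  shows "interp_max P \<alpha> \<beta> w0 w1 \<le> 2 ^ P"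
proof -
  have "\<beta> * (w1 - w0) div 2 ^ P \<le> 2 ^ P * (w1 - w0) div 2 ^ P"
    using assms(2) by (intro div_le_mono mult_right_mono) auto
  then show ?thesis using assms(3,4) by (auto simp: interp_max_def)
qed

lemma convex_comb_err:
  fixes q x0 x1 V0 V1 e :: real
  assumes "0 \<le> q" "q \<le> 1" "\<bar>x0 - V0\<bar> \<le> e" "\<bar>x1 - V1\<bar> \<le> e"
  shows "\<bar>(q * x1 + (1 - q) * x0) - (q * V1 + (1 - q) * V0)\<bar> \<le> e"
proof -
  have "\<bar>(q * x1 + (1 - q) * x0) - (q * V1 + (1 - q) * V0)\<bar> = \<bar>q * (x1 - V1) + (1 - q) * (x0 - V0)\<bar>"
    by (simp add: algebra_simps)
  also have "\<dots> \<le> q * \<bar>x1 - V1\<bar> + (1 - q) * \<bar>x0 - V0\<bar>"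
    using assms(1,2) by (metis abs_mult abs_of_nonneg abs_triangle_ineq diff_ge_0_iff_ge)
  also have "\<dots> \<le> q * e + (1 - q) * e"
    using assms by (intro add_mono mult_left_mono) auto
  finally show ?thesis by (simp add: algebra_simps)
qed

lemma max_err:
  fixes u1 u2 v1 v2 e :: real
  shows "\<bar>u1 - v1\<bar> \<le> e \<Longrightarrow> \<bar>u2 - v2\<bar> \<le> e \<Longrightarrow> \<bar>max u1 u2 - max v1 v2\<bar> \<le> e"
  by (auto simp: abs_le_iff max_def)

lemma interp_max_round:
  fixes \<alpha> \<beta> w0 w1 :: nat
  assumes "\<alpha> \<le> 2 ^ P"
  defines "\<gamma> \<equiv> real (if w0 \<le> w1 then \<beta> else \<alpha>)"
  shows "\<bar>interp_max P \<alpha> \<beta> w0 w1 / 2 ^ P - (w0 / 2 ^ P + \<gamma> / 2 ^ P * (w1 / 2 ^ P - w0 / 2 ^ P))\<bar>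
    \<le> 1 / 2 ^ P"
proof -
  define D :: real where "D = 2 ^ P"
  have D: "0 < D" by (simp add: D_def)
  define x0 x1 where "x0 = w0 / D" and "x1 = w1 / D"
  have "\<bar>interp_max P \<alpha> \<beta> w0 w1 / D - (x0 + \<gamma> / D * (x1 - x0))\<bar> \<le> 1 / D"
  proof (cases "w0 \<le> w1")
    case True
    define X where "X = \<beta> * (w1 - w0)"
    have "real X / D / D = \<beta> / D * (x1 - x0)"
      using True D by (simp add: X_def x0_def x1_def of_nat_diff field_simps)
    moreover have "interp_max P \<alpha> \<beta> w0 w1 / D = x0 + real (X div 2 ^ P) / D"
      using True by (simp add: interp_max_def X_def x0_def add_divide_distrib)
    moreover have "\<bar>real (X div 2 ^ P) / D - X / D / D\<bar> \<le> 1 / D"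
      unfolding D_def by (rule div_power2_err)
    ultimately show ?thesis using True by (simp add: \<gamma>_def)
  next
    case False
    define X where "X = \<alpha> * (w0 - w1)"
    have "real X / D / D = - (\<alpha> / D * (x1 - x0))"
      using False D by (simp add: X_def x0_def x1_def of_nat_diff field_simps)
    moreover have "X div 2 ^ P \<le> 2 ^ P * (w0 - w1) div 2 ^ P"
      using assms(1) unfolding X_def by (intro div_le_mono mult_right_mono) auto
    then have "interp_max P \<alpha> \<beta> w0 w1 / D = x0 - real (X div 2 ^ P) / D"
      using False by (simp add: interp_max_def X_def x0_def of_nat_diff diff_divide_distrib)
    moreover have "\<bar>real (X div 2 ^ P) / D - X / D / D\<bar> \<le> 1 / D"
      unfolding D_def by (rule div_power2_err)
    ultimately show ?thesis using False by (simp add: \<gamma>_def abs_minus_commute)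
  qed
  then show ?thesis unfolding D_def x0_def x1_def .
qed

lemma interp_max_err:
  fixes a b V0 V1 e :: real
  assumes ab: "0 \<le> a" "a \<le> b" "b \<le> 1"
    and \<alpha>: "\<alpha> \<le> 2 ^ P" "\<bar>\<alpha> / 2 ^ P - a\<bar> \<le> 2 / 2 ^ P"
    and \<beta>: "\<beta> \<le> 2 ^ P" "\<bar>\<beta> / 2 ^ P - b\<bar> \<le> 2 / 2 ^ P"
    and w: "w0 \<le> 2 ^ P" "w1 \<le> 2 ^ P" "\<bar>w0 / 2 ^ P - V0\<bar> \<le> e" "\<bar>w1 / 2 ^ P - V1\<bar> \<le> e"
  shows "\<bar>interp_max P \<alpha> \<beta> w0 w1 / 2 ^ P - max (a * V1 + (1 - a) * V0) (b * V1 + (1 - b) * V0)\<bar>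
    \<le> e + 3 / 2 ^ P"
proof -
  define D :: real where "D = 2 ^ P"
  have D: "0 < D" by (simp add: D_def)
  define x0 x1 where "x0 = w0 / D" and "x1 = w1 / D"
  have x: "0 \<le> x0" "x0 \<le> 1" "0 \<le> x1" "x1 \<le> 1"
    using w(1,2) by (simp_all add: x0_def x1_def D_def field_simps)
  define q where "q = (if w0 \<le> w1 then b else a)"
  define \<gamma> where "\<gamma> = (if w0 \<le> w1 then \<beta> else \<alpha>)"
  have round: "\<bar>interp_max P \<alpha> \<beta> w0 w1 / D - (x0 + \<gamma> / D * (x1 - x0))\<bar> \<le> 1 / D"
    using interp_max_round[OF \<alpha>(1), of \<beta> w0 w1] unfolding D_def x0_def x1_def \<gamma>_def .
  have lin: "p * x1 + (1 - p) * x0 = x0 + p * (x1 - x0)" for p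
    by (simp add: algebra_simps)
  have "\<bar>\<gamma> / D - q\<bar> \<le> 2 / D" using \<alpha> \<beta> by (simp add: \<gamma>_def q_def D_def)
  then have "\<bar>\<gamma> / D - q\<bar> * \<bar>x1 - x0\<bar> \<le> 2 / D * 1"
    using x D by (intro mult_mono) auto
  moreover have "\<gamma> / D * (x1 - x0) - q * (x1 - x0) = (\<gamma> / D - q) * (x1 - x0)"
    by (simp add: algebra_simps)
  ultimately have "\<bar>\<gamma> / D * (x1 - x0) - q * (x1 - x0)\<bar> \<le> 2 / D"
    by (simp only: abs_mult)
  moreover have "x0 + q * (x1 - x0) = max (a * x1 + (1 - a) * x0) (b * x1 + (1 - b) * x0)"
  proof (cases "w0 \<le> w1")
    case True
    then have "x0 \<le> x1" using D by (simp add: x0_def x1_def divide_right_mono)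
    then have "a * (x1 - x0) \<le> b * (x1 - x0)" using ab by (intro mult_right_mono) auto
    then show ?thesis using True by (simp add: q_def max_absorb2 lin)
  next
    case False
    then have "x1 \<le> x0" using D by (simp add: x0_def x1_def divide_right_mono)
    then have "b * (x1 - x0) \<le> a * (x1 - x0)" using ab by (intro mult_right_mono_neg) auto
    then show ?thesis using False by (simp add: q_def max_absorb1 lin)
  qed
  moreover have "\<bar>max (a * x1 + (1 - a) * x0) (b * x1 + (1 - b) * x0)
      - max (a * V1 + (1 - a) * V0) (b * V1 + (1 - b) * V0)\<bar> \<le> e"
    using ab w(3,4) by (intro max_err convex_comb_err) (auto simp: x0_def x1_def D_def)
  ultimately show ?thesis using round unfolding D_def[symmetric] abs_le_iff by linarith
qed

section \<open>The approximation algorithm\<close>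

(* A query x = prod_encode (enc_DNS encD (d, p, s), N) asks for the upper probability of
   [C_{d,p}] given s to within 2^-N; the tree recursion runs over the K = query_depth x levels
   below s, at scale 2 ^ query_scale x. *)
definition query_dom :: "nat \<Rightarrow> nat" where
  "query_dom x = fst (prod_decode (fst (prod_decode x)))"

definition query_horizon :: "nat \<Rightarrow> nat" where
  "query_horizon x = fst (prod_decode (snd (prod_decode (fst (prod_decode x)))))"

definition query_len :: "nat \<Rightarrow> nat" where
  "query_len x = length (list_decode (snd (prod_decode (snd (prod_decode (fst (prod_decode x)))))))"

definition query_node :: "nat \<Rightarrow> nat" where
  "query_node x = foldl (\<lambda>m d. 2 * m + d) 0 (list_decode (snd (prod_decode (snd (prod_decode (fst (prod_decode x)))))))"

definition query_depth :: "nat \<Rightarrow> nat" where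
  "query_depth x = query_horizon x - query_len x"

definition query_scale :: "nat \<Rightarrow> nat" where
  "query_scale x = snd (prod_decode x) + query_depth x + 2"

lemma query_enc_DNS:
  assumes "x = prod_encode (enc_DNS encD (d, p, s), N)"
  shows "query_dom x = encD d" "query_horizon x = p" "query_len x = length s"
    "query_node x = bin_val s" "query_depth x = p - length s" "query_scale x = N + (p - length s) + 2"
  using assms
  by (simp_all add: query_dom_def query_horizon_def query_len_def query_node_def query_depth_def
      query_scale_def enc_DNS_def length_list_decode_enc_str binary_value_list_decode_enc_str)

lemma computable_query [computable_intros]:
  assumes "computable n a"
  shows "computable n (\<lambda>xs. query_dom (a xs))" "computable n (\<lambda>xs. query_horizon (a xs))"
    "computable n (\<lambda>xs. query_len (a xs))" "computable n (\<lambda>xs. query_node (a xs))"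
    "computable n (\<lambda>xs. query_depth (a xs))" "computable n (\<lambda>xs. query_scale (a xs))"
  unfolding query_dom_def query_horizon_def query_len_def query_node_def query_depth_def query_scale_def
  by (rule computable_intros assms)+

definition hits_code :: "(nat \<Rightarrow> nat) \<Rightarrow> nat \<Rightarrow> nat \<Rightarrow> nat \<Rightarrow> nat \<Rightarrow> nat" where
  "hits_code g dc p n L =
     of_bool (\<exists>l<Suc (min L p). g (prod_encode (dc, prod_encode (p, enc_str (bits (n div 2 ^ (L - l)) l)))) = 0)"

definition upper_exp_approx :: "(nat \<Rightarrow> nat) \<Rightarrow> (nat \<Rightarrow> nat) \<Rightarrow> nat \<Rightarrow> nat \<Rightarrow> nat \<Rightarrow> nat \<Rightarrow> nat" where
  "upper_exp_approx qL qU P c w0 w1 =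
     interp_max P (dyadic_approx (qL (prod_encode (c, P))) P) (dyadic_approx (qU (prod_encode (c, P))) P) w0 w1"

definition upper_prob_approx :: "(nat \<Rightarrow> nat) \<Rightarrow> (nat \<Rightarrow> nat) \<Rightarrow> (nat \<Rightarrow> nat) \<Rightarrow> nat \<Rightarrow> nat" where
  "upper_prob_approx g qL qU x = prod_encode (2 * tree_rec
     (\<lambda>j. hits_code g (query_dom x) (query_horizon x)
            (query_node x * 2 ^ query_depth x + j) (query_len x + query_depth x) * 2 ^ query_scale x)
     (\<lambda>r j. upper_exp_approx qL qU (query_scale x)
            (enc_str (bits (query_node x * 2 ^ (query_depth x - Suc r) + j) (query_len x + query_depth x - Suc r))))
     (query_depth x) 0, 2 ^ query_scale x - 1)"

lemma recursive_upper_prob_approx: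
  assumes g: "recursive_fun g" and qL: "recursive_fun qL" and qU: "recursive_fun qU"
  shows "recursive_fun (upper_prob_approx g qL qU)"
proof -
  note oracles = computable_recursive_fun[OF g] computable_recursive_fun[OF qL] computable_recursive_fun[OF qU]
  have tree: "computable 1 (\<lambda>ys. tree_rec
     (\<lambda>j. hits_code g (query_dom (ys!0)) (query_horizon (ys!0))
            (query_node (ys!0) * 2 ^ query_depth (ys!0) + j) (query_len (ys!0) + query_depth (ys!0))
          * 2 ^ query_scale (ys!0))
     (\<lambda>r j. upper_exp_approx qL qU (query_scale (ys!0))
            (enc_str (bits (query_node (ys!0) * 2 ^ (query_depth (ys!0) - Suc r) + j)
              (query_len (ys!0) + query_depth (ys!0) - Suc r))))
     (query_depth (ys!0)) 0)"
  proof (rule computable_tree_rec[where B = "\<lambda>x. Suc (2 ^ query_scale x)"])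
    show "computable 2 (\<lambda>ys. hits_code g (query_dom (ys!0)) (query_horizon (ys!0))
        (query_node (ys!0) * 2 ^ query_depth (ys!0) + ys!1) (query_len (ys!0) + query_depth (ys!0))
        * 2 ^ query_scale (ys!0))"
      unfolding hits_code_def by (rule computable_intros oracles | simp)+
    show "computable 5 (\<lambda>ys. upper_exp_approx qL qU (query_scale (ys!0))
        (enc_str (bits (query_node (ys!0) * 2 ^ (query_depth (ys!0) - Suc (ys!1)) + ys!2)
          (query_len (ys!0) + query_depth (ys!0) - Suc (ys!1)))) (ys!3) (ys!4))"
      unfolding upper_exp_approx_def interp_max_def dyadic_approx_def by (rule computable_intros oracles | simp)+
    show "computable 1 (\<lambda>ys. query_depth (ys!0))" "computable 1 (\<lambda>ys. Suc (2 ^ query_scale (ys!0)))"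
      by (rule computable_intros | simp)+
    show "hits_code g (query_dom x) (query_horizon x) (query_node x * 2 ^ query_depth x + j)
        (query_len x + query_depth x) * 2 ^ query_scale x < Suc (2 ^ query_scale x)" for x j
      by (simp add: hits_code_def)
    show "upper_exp_approx qL qU (query_scale x) (enc_str (bits (query_node x * 2 ^ (query_depth x - Suc r) + j)
        (query_len x + query_depth x - Suc r))) w0 w1 < Suc (2 ^ query_scale x)"
      if "w0 < Suc (2 ^ query_scale x)" "w1 < Suc (2 ^ query_scale x)" for x r j w0 w1
      using that unfolding upper_exp_approx_def by (simp add: interp_max_le dyadic_approx_le less_Suc_eq_le)
  qed
  have "computable 1 (\<lambda>ys. upper_prob_approx g qL qU (ys!0))"
    unfolding upper_prob_approx_def by (rule computable_intros tree | simp)+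
  then show ?thesis by (rule recursive_fun_computable)
qed

lemma rat_of_code_dyadic: "real_of_rat (rat_of_code (prod_encode (2 * W, 2 ^ P - 1))) = W / 2 ^ P"
  by (simp add: rat_of_code_def int_decode_def sum_decode_def of_rat_divide of_rat_add of_rat_power)

lemma three_mult_div_power2_le: "3 * real k / 2 ^ (N + k + 2) \<le> (1/2) ^ N"
proof -
  have "real k < 2 ^ k" using less_exp[of k] by (metis of_nat_less_iff of_nat_numeral of_nat_power)
  moreover have "(0::real) \<le> 2 ^ k" by simp
  ultimately have "3 * real k \<le> 4 * 2 ^ k" by linarith
  then have "3 * real k / 2 ^ (N + k + 2) \<le> 4 * 2 ^ k / 2 ^ (N + k + 2)"
    by (rule divide_right_mono) simp
  also have "\<dots> = (1/2) ^ N" by (simp add: power_add power_one_over field_simps)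
  finally show ?thesis .
qed

context
  fixes \<phi> :: "bool list \<Rightarrow> real set" and g qL qU :: "nat \<Rightarrow> nat"
    and encD :: "'d \<Rightarrow> nat" and C :: "('d \<times> nat \<times> bool list) set"
  assumes fs: "forecasting_system \<phi>"
    and g: "\<And>e. e \<in> C \<longleftrightarrow> g (enc_DNS encD e) = 0"
    and qL: "\<And>t M. \<bar>Inf (\<phi> t) - real_of_rat (rat_of_code (qL (prod_encode (enc_str t, M))))\<bar> \<le> (1/2) ^ M"
    and qU: "\<And>t M. \<bar>Sup (\<phi> t) - real_of_rat (rat_of_code (qU (prod_encode (enc_str t, M))))\<bar> \<le> (1/2) ^ M"
    and C_len: "\<forall>(d, p, s)\<in>C. length s \<le> p"
begin

lemma hits_code_eq: "hits_code g (encD d) p n L = of_bool (hits {t. (d, p, t) \<in> C} p (bits n L))"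
proof -
  have g': "g (prod_encode (encD d, prod_encode (p, enc_str t))) = 0 \<longleftrightarrow> (d, p, t) \<in> C" for t
    using g[of "(d, p, t)"] by (simp add: enc_DNS_def)
  have "(\<exists>l<Suc (min L p). (d, p, bits (n div 2 ^ (L - l)) l) \<in> C) \<longleftrightarrow> (\<exists>l\<le>p. (d, p, take l (bits n L)) \<in> C)"
  proof
    assume "\<exists>l\<le>p. (d, p, take l (bits n L)) \<in> C"
    then obtain l where l: "l \<le> p" "(d, p, take l (bits n L)) \<in> C" by blast
    then have "min l L \<le> L" "min l L \<le> p" "(d, p, take (min l L) (bits n L)) \<in> C"
      by (auto simp: min_def)
    then show "\<exists>l<Suc (min L p). (d, p, bits (n div 2 ^ (L - l)) l) \<in> C"
      by (intro exI[of _ "min l L"]) (simp add: take_bits)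
  next
    assume "\<exists>l<Suc (min L p). (d, p, bits (n div 2 ^ (L - l)) l) \<in> C"
    then obtain l where "l \<le> L" "l \<le> p" "(d, p, bits (n div 2 ^ (L - l)) l) \<in> C"
      by (metis less_Suc_eq_le min.bounded_iff)
    then show "\<exists>l\<le>p. (d, p, take l (bits n L)) \<in> C"
      by (intro exI[of _ l]) (simp add: take_bits)
  qed
  then show ?thesis by (simp add: hits_code_def hits_def g')
qed

lemma upper_exp_approx_err:
  assumes "w0 \<le> 2 ^ P" "w1 \<le> 2 ^ P" "\<bar>w0 / 2 ^ P - V False\<bar> \<le> e" "\<bar>w1 / 2 ^ P - V True\<bar> \<le> e"
  shows "upper_exp_approx qL qU P (enc_str t) w0 w1 \<le> 2 ^ P
    \<and> \<bar>upper_exp_approx qL qU P (enc_str t) w0 w1 / 2 ^ P - upper_exp (\<phi> t) V\<bar> \<le> e + 3 / 2 ^ P"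
  using assms forecasting_system_interval[OF fs, of t]
    dyadic_approx_err[OF _ _ qL[of t P]] dyadic_approx_err[OF _ _ qU[of t P]]
  unfolding upper_exp_approx_def upper_exp_forecast[OF fs]
  by (intro conjI interp_max_le interp_max_err dyadic_approx_le) auto

lemma upper_prob_approx_err:
  assumes x: "x = prod_encode (enc_DNS encD (d, p, s), N)"
  shows "\<bar>real_of_rat (rat_of_code (upper_prob_approx g qL qU x)) - horizon_value \<phi> {t. (d, p, t) \<in> C} p s\<bar>
    \<le> (1/2) ^ N"
proof -
  define A where "A = {t. (d, p, t) \<in> C}"
  define K where "K = p - length s"
  define P where "P = N + K + 2"
  define leafA where "leafA t = of_bool (hits A p t) * (2::nat) ^ P" for t
  define stepA where "stepA t = upper_exp_approx qL qU P (enc_str t)" for t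
  let ?W = "backward (\<lambda>t w. stepA t (w False) (w True)) leafA K s"
  have "real_of_rat (rat_of_code (upper_prob_approx g qL qU x)) = ?W / 2 ^ P"
  proof -
    have "upper_prob_approx g qL qU x = prod_encode (2 * tree_rec
        (\<lambda>j. leafA (bits (bin_val s * 2 ^ K + j) (length s + K)))
        (\<lambda>r j. stepA (bits (bin_val s * 2 ^ (K - Suc r) + j) (length s + K - Suc r))) K 0, 2 ^ P - 1)"
      by (simp add: upper_prob_approx_def query_enc_DNS[OF x] hits_code_eq leafA_def stepA_def A_def K_def P_def)
    also have "\<dots> = prod_encode (2 * ?W, 2 ^ P - 1)"
      using tree_rec_bits[of K K leafA "bin_val s" "length s" stepA 0] by (simp add: bits_bin_val)
    finally show ?thesis by (simp only: rat_of_code_dyadic)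
  qed
  moreover have "\<bar>?W / 2 ^ P - horizon_value \<phi> A p s\<bar> \<le> K * (3 / 2 ^ P)"
    unfolding horizon_value_def K_def[symmetric]
  proof (rule conjunct2[OF backward_approx])
    show "leafA t \<le> 2 ^ P \<and> leafA t / 2 ^ P = of_bool (hits A p t)" for t
      by (simp add: leafA_def)
    show "stepA t w0 w1 \<le> 2 ^ P \<and> \<bar>stepA t w0 w1 / 2 ^ P - upper_exp (\<phi> t) V\<bar> \<le> e + 3 / 2 ^ P"
      if "w0 \<le> 2 ^ P" "w1 \<le> 2 ^ P" "\<bar>w0 / 2 ^ P - V False\<bar> \<le> e" "\<bar>w1 / 2 ^ P - V True\<bar> \<le> e"
      for t w0 w1 V e
      using upper_exp_approx_err[OF that] by (simp add: stepA_def)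
  qed
  moreover have "K * (3 / 2 ^ P) \<le> (1/2) ^ N"
    using three_mult_div_power2_le[of K N] by (simp add: P_def)
  ultimately show ?thesis unfolding A_def by linarith
qed

end

theorem lemma5p1:
  fixes \<phi> :: "bool list \<Rightarrow> real set"
    and encD :: "'d \<Rightarrow> nat"
    and C :: "('d \<times> nat \<times> bool list) set"
  assumes "forecasting_system \<phi>"
    and "computable_forecast \<phi>"
    and "inj encD"
    and "recursive_set (enc_DNS encD) C"
    and "\<forall>(d, p, s)\<in>C. length s \<le> p"
  shows "computable_real (enc_DNS encD)
           (\<lambda>(d, p, s). real_of_ereal (upper_prob \<phi> (cyl_set {t. (d, p, t) \<in> C}) s))"
proof -
  obtain g where g: "recursive_fun g" "\<And>e. e \<in> C \<longleftrightarrow> g (enc_DNS encD e) = 0"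
    using assms(4) unfolding recursive_set_def by blast
  obtain qL qU where qL: "recursive_fun qL"
      "\<And>t M. \<bar>Inf (\<phi> t) - real_of_rat (rat_of_code (qL (prod_encode (enc_str t, M))))\<bar> \<le> (1/2) ^ M"
    and qU: "recursive_fun qU"
      "\<And>t M. \<bar>Sup (\<phi> t) - real_of_rat (rat_of_code (qU (prod_encode (enc_str t, M))))\<bar> \<le> (1/2) ^ M"
    using assms(2) unfolding computable_forecast_def computable_real_def by blast
  have "\<bar>real_of_ereal (upper_prob \<phi> (cyl_set {t. (d, p, t) \<in> C}) s)
      - real_of_rat (rat_of_code (upper_prob_approx g qL qU (prod_encode (enc_DNS encD (d, p, s), N))))\<bar> \<le> (1/2) ^ N"
    for d p s N
  proof -
    have "\<forall>u\<in>{t. (d, p, t) \<in> C}. length u \<le> p" using assms(5) by auto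
    from upper_prob_cyl_set[OF assms(1) this] show ?thesis
      using upper_prob_approx_err[OF assms(1) g(2) qL(2) qU(2) assms(5) refl, of d p s N]
      by (simp add: abs_minus_commute)
  qed
  then show ?thesis
    unfolding computable_real_def using recursive_upper_prob_approx[OF g(1) qL(1) qU(1)] by fast
qed

end
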